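(* Let $(\mathcal V,\mathcal W,\lambda)$ be a FTvN system with center $C$. Then (a) every subset of $C$ is a spectral set, and (b) the orthogonal complement $C^\perp$ of $C$ in $\mathcal V$ is a spectral set.
   Context: A Fan-Theobald-von Neumann (FTvN) system is a triple $(\mathcal V,\mathcal W,\lambda)$ where $\mathcal V,\mathcal W$ are real inner product spaces and $\lambda:\mathcal V\to\mathcal W$ is a map such that: (A1) $\|\lambda(x)\|=\|x\|$ for all $x$; (A2) $\langle x,y\rangle\le\langle\lambda(x),\lambda(y)\rangle$ for all $x,y$; (A3) for every $c\in\mathcal V$ and $q\in\lambda(\mathcal V)$ there exists $x$ with $\lambda(x)=q$ and $\langle c,x\rangle=\langle\lambda(c),\lambda(x)\rangle$. The $\lambda$-orbit of $u$ is $[u]=\{x:\lambda(x)=\lambda(u)\}$; a set $E$ is spectral if $x\in E\Rightarrow[x]\subseteq E$. Elements $x,y$ commute if $\langle x,y\rangle=\langle\lambda(x),\lambda(y)\rangle$; the center $C$ is the set of elements commuting with every element of $\mathcal V$. *)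

theory Defs
  imports "HOL-Analysis.Analysis"
begin

definition FTvN_system :: "('v::real_inner \<Rightarrow> 'w::real_inner) \<Rightarrow> bool" where
  "FTvN_system lam \<longleftrightarrow>
     (\<forall>x. norm (lam x) = norm x) \<and>
     (\<forall>x y. inner x y \<le> inner (lam x) (lam y)) \<and>
     (\<forall>c. \<forall>q \<in> range lam. \<exists>x. lam x = q \<and> inner c x = inner (lam c) (lam x))"

definition lam_orbit :: "('v \<Rightarrow> 'w) \<Rightarrow> 'v \<Rightarrow> 'v set" where
  "lam_orbit lam u = {x. lam x = lam u}"

definition spectral_set :: "('v \<Rightarrow> 'w) \<Rightarrow> 'v set \<Rightarrow> bool" where
  "spectral_set lam E \<longleftrightarrow> (\<forall>x \<in> E. lam_orbit lam x \<subseteq> E)"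

definition commute :: "('v::real_inner \<Rightarrow> 'w::real_inner) \<Rightarrow> 'v \<Rightarrow> 'v \<Rightarrow> bool" where
  "commute lam x y \<longleftrightarrow> inner x y = inner (lam x) (lam y)"

definition center :: "('v::real_inner \<Rightarrow> 'w::real_inner) \<Rightarrow> 'v set" where
  "center lam = {c. \<forall>x. commute lam c x}"

end

theory Submission
  imports Defs
begin

text \<open>An element c of the center commutes with everything, so for x in a \<open>\<lambda>\<close>-orbit
  the value \<open>\<langle>c, x\<rangle> = \<langle>\<lambda> c, \<lambda> x\<rangle>\<close> depends only on the orbit. Hence orthogonality
  to C is an orbit invariant, and any x in the orbit of c satisfies
  \<open>\<langle>c, x\<rangle> = \<parallel>c\<parallel>\<^sup>2 = \<parallel>x\<parallel>\<^sup>2\<close>, which forces x = c: the orbits of central elements are singletons.\<close>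

lemma center_inner_eq:
  assumes "c \<in> center lam"
  shows "inner c x = inner (lam c) (lam x)"
  using assms unfolding center_def commute_def by blast

lemma center_inner_orbit_invariant:
  assumes "c \<in> center lam" and "y \<in> lam_orbit lam x"
  shows "inner c y = inner c x"
  using assms by (simp add: center_inner_eq lam_orbit_def)

lemma eq_of_norm_eq_of_inner_eq_norm_square:
  fixes c x :: "'a::real_inner"
  assumes "norm x = norm c" and "inner c x = (norm c)\<^sup>2"
  shows "x = c"
proof -
  have "(norm (x - c))\<^sup>2 = (norm x)\<^sup>2 - 2 * inner c x + (norm c)\<^sup>2"
    by (simp add: power2_norm_eq_inner inner_diff_left inner_diff_right inner_commute)
  also have "\<dots> = 0"
    using assms by simp
  finally show ?thesis
    by simp
qed

lemma lam_orbit_center: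
  assumes norm_lam: "\<And>x. norm (lam x) = norm x" and "c \<in> center lam"
  shows "lam_orbit lam c = {c}"
proof
  show "lam_orbit lam c \<subseteq> {c}"
  proof
    fix x
    assume "x \<in> lam_orbit lam c"
    then have lam_x: "lam x = lam c"
      by (simp add: lam_orbit_def)
    have "norm x = norm c"
      by (metis norm_lam lam_x)
    moreover have "inner c x = (norm c)\<^sup>2"
      using \<open>c \<in> center lam\<close> lam_x norm_lam[of c]
      by (simp add: center_inner_eq power2_norm_eq_inner)
    ultimately show "x \<in> {c}"
      using eq_of_norm_eq_of_inner_eq_norm_square by blast
  qed
  show "{c} \<subseteq> lam_orbit lam c"
    by (simp add: lam_orbit_def)
qed

lemma spectral_set_subset_center:
  assumes "\<And>x. norm (lam x) = norm x" and "E \<subseteq> center lam"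
  shows "spectral_set lam E"
  unfolding spectral_set_def
proof
  fix c
  assume "c \<in> E"
  then have "lam_orbit lam c = {c}"
    using assms lam_orbit_center by blast
  then show "lam_orbit lam c \<subseteq> E"
    using \<open>c \<in> E\<close> by simp
qed

lemma spectral_set_orthogonal_comp_center:
  "spectral_set lam (orthogonal_comp (center lam))"
  unfolding spectral_set_def orthogonal_comp_def orthogonal_def
  using center_inner_orbit_invariant by fastforce

theorem proposition6p5:
  fixes lam :: "'v::real_inner \<Rightarrow> 'w::real_inner"
  assumes "FTvN_system lam"
  shows "(\<forall>E. E \<subseteq> center lam \<longrightarrow> spectral_set lam E)
         \<and> spectral_set lam (orthogonal_comp (center lam))"
proof -
  have "\<And>x. norm (lam x) = norm x"
    using assms unfolding FTvN_system_def by blast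
  then show ?thesis
    using spectral_set_subset_center spectral_set_orthogonal_comp_center by blast
qed

end
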